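(* For all integers $s\ge3$ and $k\ge2$ there are infinitely many pairwise non-isomorphic connected graphs $G\in\mathcal G^s_1$ with $v(G)\neq k$ such that $\tau_k(G)=\dfrac{v(G)-k}{sk-k+1}$.
   Context: All graphs are finite and simple. For integers $1\le r\le s$, $\mathcal G^s_r$ denotes the set of graphs in which every vertex has degree at least $r$ and at most $s$. $v(G)$ is the number of vertices of $G$. For an integer $k\ge1$, $\tau_k(G)$ denotes the maximum number of pairwise vertex-disjoint subgraphs of $G$ each of which is a tree with exactly $k$ edges. *)

theory Defs
  imports Complex_Main
begin

type_synonym 'a graph = "'a set \<times> 'a set set"

definition verts :: "'a graph \<Rightarrow> 'a set" where "verts G = fst G"
definition edges :: "'a graph \<Rightarrow> 'a set set" where "edges G = snd G"

definition simple_graph :: "'a graph \<Rightarrow> bool" where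
  "simple_graph G \<longleftrightarrow> finite (verts G) \<and>
     (\<forall>e\<in>edges G. \<exists>x y. x \<noteq> y \<and> x \<in> verts G \<and> y \<in> verts G \<and> e = {x, y})"

definition adj :: "'a graph \<Rightarrow> 'a \<Rightarrow> 'a \<Rightarrow> bool" where
  "adj G x y \<longleftrightarrow> {x, y} \<in> edges G"

definition degree :: "'a graph \<Rightarrow> 'a \<Rightarrow> nat" where
  "degree G x = card {e \<in> edges G. x \<in> e}"

text \<open>Membership in the class G^s_r: all degrees between r and s.\<close>
definition in_Gclass :: "nat \<Rightarrow> nat \<Rightarrow> 'a graph \<Rightarrow> bool" where
  "in_Gclass r s G \<longleftrightarrow> simple_graph G \<and> (\<forall>x\<in>verts G. r \<le> degree G x \<and> degree G x \<le> s)"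

definition connected_graph :: "'a graph \<Rightarrow> bool" where
  "connected_graph G \<longleftrightarrow> verts G \<noteq> {} \<and>
     (\<forall>x\<in>verts G. \<forall>y\<in>verts G. (adj G)\<^sup>*\<^sup>* x y)"

definition has_cycle :: "'a graph \<Rightarrow> bool" where
  "has_cycle G \<longleftrightarrow> (\<exists>cs. length cs \<ge> 3 \<and> distinct cs \<and> set cs \<subseteq> verts G \<and>
      (\<forall>i. Suc i < length cs \<longrightarrow> adj G (cs ! i) (cs ! Suc i)) \<and>
      adj G (last cs) (hd cs))"

definition is_tree :: "'a graph \<Rightarrow> bool" where
  "is_tree G \<longleftrightarrow> simple_graph G \<and> connected_graph G \<and> \<not> has_cycle G"

definition subgraph :: "'a graph \<Rightarrow> 'a graph \<Rightarrow> bool" where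
  "subgraph H G \<longleftrightarrow> verts H \<subseteq> verts G \<and> edges H \<subseteq> edges G \<and> simple_graph H"

definition tree_packing :: "nat \<Rightarrow> 'a graph \<Rightarrow> 'a graph set \<Rightarrow> bool" where
  "tree_packing k G Ts \<longleftrightarrow>
     (\<forall>T\<in>Ts. subgraph T G \<and> is_tree T \<and> card (edges T) = k) \<and>
     (\<forall>T1\<in>Ts. \<forall>T2\<in>Ts. T1 \<noteq> T2 \<longrightarrow> verts T1 \<inter> verts T2 = {})"

definition tau :: "nat \<Rightarrow> 'a graph \<Rightarrow> nat" where
  "tau k G = Max {card Ts | Ts. tree_packing k G Ts}"

definition graph_iso :: "'a graph \<Rightarrow> 'b graph \<Rightarrow> bool" where
  "graph_iso G H \<longleftrightarrow> (\<exists>f. bij_betw f (verts G) (verts H) \<and>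
     (\<forall>x\<in>verts G. \<forall>y\<in>verts G. adj G x y \<longleftrightarrow> adj H (f x) (f y)))"

end

theory Submission
  imports Defs
begin

text \<open>The extremal graphs are trees built from m hubs of degree s and (s - 1) m + 1
  vertex-disjoint paths on k vertices each, so that v(G) = k + m (s k - k + 1). A connected
  subgraph avoiding the hubs lies inside one of these paths, which has only k - 1 edges; hence
  every subtree with k edges contains a hub and tau_k(G) <= m. Conversely, each hub together
  with the path ending at it is a path with k edges, giving m disjoint such trees. Graphs for
  different m have different orders, so they are pairwise non-isomorphic.\<close>

lemma adj_commute: "adj G x y \<longleftrightarrow> adj G y x"
  by (simp add: adj_def insert_commute)

lemma finite_edges:
  assumes "simple_graph G"
  shows "finite (edges G)"
proof -
  have "edges G \<subseteq> Pow (verts G)" using assms unfolding simple_graph_def by fastforce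
  moreover have "finite (verts G)" using assms unfolding simple_graph_def by simp
  ultimately show ?thesis by (meson finite_Pow_iff finite_subset)
qed

lemma connected_graphI:
  assumes "x0 \<in> verts G" and "\<And>x. x \<in> verts G \<Longrightarrow> (adj G)\<^sup>*\<^sup>* x0 x"
  shows "connected_graph G"
proof -
  have "symp (adj G)" by (rule sympI) (simp add: adj_commute)
  then have to_root: "(adj G)\<^sup>*\<^sup>* x x0" if "x \<in> verts G" for x
    using assms(2)[OF that] by (blast dest: sympD[OF symp_rtranclp])
  show ?thesis unfolding connected_graph_def
  proof (intro conjI ballI)
    show "verts G \<noteq> {}" using assms(1) by blast
    fix x y assume "x \<in> verts G" "y \<in> verts G"
    then show "(adj G)\<^sup>*\<^sup>* x y" using to_root assms(2) by (meson rtranclp_trans)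
  qed
qed

lemma connected_graph_if_smaller_neighbour:
  fixes G :: "nat graph"
  assumes "x0 \<in> verts G"
    and "\<And>x. x \<in> verts G \<Longrightarrow> x \<noteq> x0 \<Longrightarrow> \<exists>y\<in>verts G. y < x \<and> adj G y x"
  shows "connected_graph G"
proof (rule connected_graphI[OF assms(1)])
  fix x assume "x \<in> verts G"
  then show "(adj G)\<^sup>*\<^sup>* x0 x"
  proof (induction x rule: less_induct)
    case (less x)
    show ?case
    proof (cases "x = x0")
      case False
      then obtain y where "y \<in> verts G" "y < x" "adj G y x"
        using assms(2) less.prems by blast
      then show ?thesis using less.IH by (meson rtranclp.rtrancl_into_rtrancl)
    qed simp
  qed
qed

lemma connected_graph_ex_adj:
  assumes "connected_graph G" "x \<in> verts G" "y \<in> verts G" "x \<noteq> y"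
  shows "\<exists>z. adj G x z"
proof -
  have "(adj G)\<^sup>*\<^sup>* x y" using assms(1-3) unfolding connected_graph_def by blast
  then show ?thesis using assms(4) by (cases rule: converse_rtranclpE) auto
qed

lemma connected_graph_const:
  assumes "connected_graph G" "\<And>u v. adj G u v \<Longrightarrow> f u = f v" "u \<in> verts G" "v \<in> verts G"
  shows "f u = f v"
proof -
  have "(adj G)\<^sup>*\<^sup>* u v" using assms(1,3,4) unfolding connected_graph_def by blast
  then show ?thesis by (induction rule: rtranclp_induct) (auto dest: assms(2))
qed

lemma degree_le_card:
  assumes "simple_graph G" "finite B" "\<And>y. adj G x y \<Longrightarrow> y \<in> B"
  shows "degree G x \<le> card B"
proof -
  have "{e \<in> edges G. x \<in> e} \<subseteq> (\<lambda>y. {x, y}) ` B"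
  proof
    fix e assume e: "e \<in> {e \<in> edges G. x \<in> e}"
    then obtain a b where "e = {a, b}" using assms(1) unfolding simple_graph_def by blast
    with e have "e = {x, if x = a then b else a}" by auto
    moreover have "adj G x (if x = a then b else a)" using calculation e unfolding adj_def by simp
    ultimately show "e \<in> (\<lambda>y. {x, y}) ` B" using assms(3) by blast
  qed
  then have "degree G x \<le> card ((\<lambda>y. {x, y}) ` B)"
    unfolding degree_def using assms(2) by (intro card_mono) auto
  also have "\<dots> \<le> card B" by (rule card_image_le[OF assms(2)])
  finally show ?thesis .
qed

lemma degree_pos:
  assumes "simple_graph G" "adj G x y"
  shows "0 < degree G x"
  using assms finite_edges[OF assms(1)] unfolding degree_def adj_def by (auto simp: card_gt_0_iff)

lemma graph_iso_card_verts: "graph_iso G H \<Longrightarrow> card (verts G) = card (verts H)"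
  unfolding graph_iso_def by (auto intro: bij_betw_same_card)

text \<open>The largest vertex of a cycle would need two distinct smaller neighbours,
  but with successor edges only its predecessor is available.\<close>
lemma no_cycle_if_successor_edges:
  fixes G :: "nat graph"
  assumes succ: "\<And>e. e \<in> edges G \<Longrightarrow> \<exists>x. e = {x, Suc x}"
  shows "\<not> has_cycle G"
proof
  assume "has_cycle G"
  then obtain cs where len: "length cs \<ge> 3" and dist: "distinct cs"
    and cons: "\<forall>i. Suc i < length cs \<longrightarrow> adj G (cs ! i) (cs ! Suc i)"
    and lh: "adj G (last cs) (hd cs)"
    unfolding has_cycle_def by blast
  define n where "n = length cs"
  have adj_succ: "a = Suc b \<or> b = Suc a" if "adj G a b" for a b
  proof -
    from that succ obtain z where "{a, b} = {z, Suc z}" unfolding adj_def by blast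
    then show ?thesis by (auto simp: doubleton_eq_iff)
  qed
  define x where "x = Max (set cs)"
  have "cs \<noteq> []" using len by auto
  then have "x \<in> set cs" unfolding x_def by simp
  then obtain j where j: "j < n" "cs ! j = x" unfolding n_def by (auto simp: in_set_conv_nth)
  have le_x: "cs ! i \<le> x" if "i < n" for i
    unfolding x_def using that unfolding n_def by (intro Max_ge) auto
  have ne_x: "cs ! i \<noteq> x" if "i < n" "i \<noteq> j" for i
    using dist j that unfolding n_def by (metis nth_eq_iff_index_eq)
  define p where "p = (if j = 0 then n - 1 else j - 1)"
  define q where "q = (if j = n - 1 then 0 else j + 1)"
  have pq: "p < n" "q < n" "p \<noteq> j" "q \<noteq> j" "p \<noteq> q"
    using j len unfolding p_def q_def n_def by auto
  have adj_p: "adj G (cs ! p) x"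
  proof (cases "j = 0")
    case True
    then have "cs ! p = last cs" "x = hd cs" using j \<open>cs \<noteq> []\<close>
      unfolding p_def n_def by (auto simp: last_conv_nth hd_conv_nth)
    then show ?thesis using lh by simp
  next
    case False
    then show ?thesis using cons j unfolding p_def n_def by (metis Suc_pred' not_gr_zero)
  qed
  have "cs ! p = x - 1" using adj_succ[OF adj_p] le_x[of p] ne_x[of p] pq by auto
  have adj_q: "adj G x (cs ! q)"
  proof (cases "j = n - 1")
    case True
    then have "cs ! q = hd cs" "x = last cs" using j \<open>cs \<noteq> []\<close>
      unfolding q_def n_def by (auto simp: last_conv_nth hd_conv_nth)
    then show ?thesis using lh by simp
  next
    case False
    then show ?thesis using cons j unfolding q_def n_def by auto
  qed
  have "cs ! q = x - 1" using adj_succ[OF adj_q] le_x[of q] ne_x[of q] pq by auto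
  with \<open>cs ! p = x - 1\<close> have "cs ! p = cs ! q" by simp
  then show False using dist pq unfolding n_def by (simp add: nth_eq_iff_index_eq)
qed

definition path_graph :: "nat \<Rightarrow> nat \<Rightarrow> nat graph" where
  "path_graph a k = ({a..a+k}, (\<lambda>x. {x, Suc x}) ` {a..<a+k})"

lemma verts_path_graph [simp]: "verts (path_graph a k) = {a..a+k}"
  and edges_path_graph [simp]: "edges (path_graph a k) = (\<lambda>x. {x, Suc x}) ` {a..<a+k}"
  unfolding path_graph_def verts_def edges_def by simp_all

lemma is_tree_path_graph: "is_tree (path_graph a k)"
proof -
  have "simple_graph (path_graph a k)"
    unfolding simple_graph_def
  proof (intro conjI ballI)
    fix e assume "e \<in> edges (path_graph a k)"
    then obtain x where "x \<in> {a..<a+k}" "e = {x, Suc x}" by auto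
    then show "\<exists>y z. y \<noteq> z \<and> y \<in> verts (path_graph a k) \<and> z \<in> verts (path_graph a k) \<and> e = {y, z}"
      by (intro exI[of _ x] exI[of _ "Suc x"]) auto
  qed simp
  moreover have "connected_graph (path_graph a k)"
  proof (rule connected_graph_if_smaller_neighbour[of a])
    fix x assume "x \<in> verts (path_graph a k)" "x \<noteq> a"
    then have "x - 1 \<in> {a..<a+k}" "Suc (x - 1) = x" by auto
    then have "{x - 1, x} \<in> edges (path_graph a k)"
      unfolding edges_path_graph by (intro image_eqI[of _ _ "x - 1"]) simp_all
    then show "\<exists>y\<in>verts (path_graph a k). y < x \<and> adj (path_graph a k) y x"
      using \<open>x - 1 \<in> {a..<a+k}\<close> \<open>x \<noteq> a\<close> unfolding adj_def by (intro bexI[of _ "x - 1"]) auto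
  qed simp
  moreover have "\<not> has_cycle (path_graph a k)"
    by (rule no_cycle_if_successor_edges) auto
  ultimately show ?thesis unfolding is_tree_def by blast
qed

lemma card_edges_path_graph: "card (edges (path_graph a k)) = k"
proof -
  have "inj_on (\<lambda>x. {x, Suc x}) {a..<a+k}" by (auto simp: inj_on_def doubleton_eq_iff)
  then show ?thesis by (simp add: card_image)
qed

lemma tree_packing_card_le_hitting_set:
  assumes "tree_packing k G Ts" "finite C"
    and "\<And>T. subgraph T G \<Longrightarrow> is_tree T \<Longrightarrow> card (edges T) = k \<Longrightarrow> verts T \<inter> C \<noteq> {}"
  shows "card Ts \<le> card C"
proof -
  define f where "f T = (SOME c. c \<in> verts T \<inter> C)" for T
  have f: "f T \<in> verts T \<inter> C" if "T \<in> Ts" for T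
  proof -
    have "subgraph T G" "is_tree T" "card (edges T) = k"
      using assms(1) that unfolding tree_packing_def by simp_all
    then have "verts T \<inter> C \<noteq> {}" by (rule assms(3))
    then show ?thesis unfolding f_def by (rule some_in_eq[THEN iffD2])
  qed
  have "inj_on f Ts"
  proof (rule inj_onI)
    fix T1 T2 assume T: "T1 \<in> Ts" "T2 \<in> Ts" "f T1 = f T2"
    show "T1 = T2"
    proof (rule ccontr)
      assume "T1 \<noteq> T2"
      then have "verts T1 \<inter> verts T2 = {}"
        using assms(1) T(1,2) unfolding tree_packing_def by blast
      moreover have "f T1 \<in> verts T1" "f T1 \<in> verts T2" using f[OF T(1)] f[OF T(2)] T(3) by auto
      ultimately show False by blast
    qed
  qed
  moreover have "f ` Ts \<subseteq> C" using f by blast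
  ultimately show ?thesis using assms(2) by (rule card_inj_on_le)
qed

lemma tau_eqI:
  assumes "tree_packing k G Ts" "\<And>Ts'. tree_packing k G Ts' \<Longrightarrow> card Ts' \<le> card Ts"
  shows "tau k G = card Ts"
proof -
  let ?S = "{card Ts' | Ts'. tree_packing k G Ts'}"
  have "finite ?S" by (rule finite_subset[of _ "{..card Ts}"]) (auto dest: assms(2))
  then show ?thesis unfolding tau_def using assms by (intro Max_eqI) auto
qed

text \<open>Vertex vx q r is position r of block q. Every block q < nblocks is a path on the
  positions 0, ..., k - 1. For b < m, position k of block b is a hub: it prolongs the path of
  block b into block b + 1 and is joined to the first vertex of each of the s - 2 leg blocks
  leg b j. Hence the successor edges form one path through the blocks 0, ..., m and a separate
  path in every leg block.\<close>
locale hub_construction =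
  fixes k s m :: nat
  assumes k_ge_2: "2 \<le> k" and s_ge_3: "3 \<le> s"
begin

definition vx :: "nat \<Rightarrow> nat \<Rightarrow> nat" where "vx q r = q * Suc k + r"
definition nblocks :: nat where "nblocks = m + 1 + m * (s - 2)"
definition leg :: "nat \<Rightarrow> nat \<Rightarrow> nat" where "leg b j = m + 1 + b * (s - 2) + j"

definition V :: "nat set" where
  "V = {vx q r | q r. q < nblocks \<and> (r < k \<or> q < m \<and> r = k)}"
definition hubs :: "nat set" where "hubs = (\<lambda>b. vx b k) ` {..<m}"
definition successor_edges :: "nat set set" where
  "successor_edges = {{x, Suc x} | x. x \<in> V \<and> Suc x \<in> V}"
definition leg_edges :: "nat set set" where
  "leg_edges = {{vx b k, vx (leg b j) 0} | b j. b < m \<and> j < s - 2}"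
definition hub_graph :: "nat graph" where
  "hub_graph = (V, successor_edges \<union> leg_edges)"

lemma verts_hub_graph [simp]: "verts hub_graph = V"
  and edges_hub_graph [simp]: "edges hub_graph = successor_edges \<union> leg_edges"
  unfolding hub_graph_def verts_def edges_def by simp_all

lemma vx_div [simp]: "r \<le> k \<Longrightarrow> vx q r div Suc k = q"
  unfolding vx_def by (rule div_nat_eqI) (simp_all add: algebra_simps)

lemma vx_mod [simp]: "r \<le> k \<Longrightarrow> vx q r mod Suc k = r"
  unfolding vx_def by (metis add.commute mod_less mod_mult_self1 le_imp_less_Suc)

lemma vx_eq_iff [simp]: "r \<le> k \<Longrightarrow> r' \<le> k \<Longrightarrow> vx q r = vx q' r' \<longleftrightarrow> q = q' \<and> r = r'"
  by (metis vx_div vx_mod)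

lemma Suc_vx: "Suc (vx q r) = vx q (Suc r)"
  by (simp add: vx_def)

lemma Suc_vx_hub: "Suc (vx q k) = vx (Suc q) 0"
  by (simp add: vx_def)

lemma vx_less_vx:
  assumes "r \<le> k" "q < q'"
  shows "vx q r < vx q' r'"
proof -
  have "vx q r < Suc q * Suc k" using assms(1) unfolding vx_def by simp
  also have "\<dots> \<le> q' * Suc k" using assms(2) by (intro mult_le_mono1) simp
  also have "\<dots> \<le> vx q' r'" unfolding vx_def by simp
  finally show ?thesis .
qed

lemma m_less_nblocks: "m < nblocks"
  unfolding nblocks_def by simp

lemma vx_in_V: "q < nblocks \<Longrightarrow> r < k \<Longrightarrow> vx q r \<in> V"
  unfolding V_def by blast

lemma hub_in_V_iff: "vx q k \<in> V \<longleftrightarrow> q < m"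
proof
  assume "vx q k \<in> V"
  then obtain q' r' where eq: "vx q k = vx q' r'" and r': "r' < k \<or> q' < m \<and> r' = k"
    unfolding V_def by blast
  then have "r' \<le> k" by auto
  with eq have "q = q'" "r' = k" by simp_all
  then show "q < m" using r' by simp
next
  assume "q < m"
  then show "vx q k \<in> V" unfolding V_def using m_less_nblocks by fastforce
qed

lemma V_cases:
  assumes "x \<in> V"
  obtains q r where "x = vx q r" "q < nblocks" "r < k"
  | b where "x = vx b k" "b < m"
  using assms unfolding V_def by blast

lemma V_eq_image: "V = (\<lambda>(q, r). vx q r) ` ({..<nblocks} \<times> {..<k} \<union> {..<m} \<times> {k})"
proof (intro equalityI subsetI)
  fix x assume "x \<in> V"
  then show "x \<in> (\<lambda>(q, r). vx q r) ` ({..<nblocks} \<times> {..<k} \<union> {..<m} \<times> {k})"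
  proof (cases rule: V_cases)
    case (1 q r)
    then show ?thesis by (intro image_eqI[of _ _ "(q, r)"]) auto
  next
    case (2 b)
    then show ?thesis by (intro image_eqI[of _ _ "(b, k)"]) auto
  qed
next
  fix x assume "x \<in> (\<lambda>(q, r). vx q r) ` ({..<nblocks} \<times> {..<k} \<union> {..<m} \<times> {k})"
  then obtain q r where "x = vx q r" "q < nblocks \<and> r < k \<or> q < m \<and> r = k" by auto
  then show "x \<in> V" using vx_in_V hub_in_V_iff by auto
qed

lemma finite_V: "finite V"
  unfolding V_eq_image by simp

lemma card_V: "card V = k + m * (s * k - k + 1)"
proof -
  have "inj_on (\<lambda>(q, r). vx q r) ({..<nblocks} \<times> {..<k} \<union> {..<m} \<times> {k})"
    by (auto simp: inj_on_def)
  moreover have "card ({..<nblocks} \<times> {..<k} \<union> {..<m} \<times> {k}) = nblocks * k + m"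
    by (subst card_Un_disjoint) (auto simp: card_cartesian_product)
  moreover obtain t where "s = t + 3" using s_ge_3 by (metis le_add_diff_inverse2)
  ultimately show ?thesis
    unfolding V_eq_image nblocks_def by (simp add: card_image algebra_simps)
qed

lemma leg_less_nblocks:
  assumes "b < m" "j < s - 2"
  shows "leg b j < nblocks"
proof -
  have "b * (s - 2) + (s - 2) \<le> m * (s - 2)"
    using assms(1) mult_le_mono1[of "Suc b" m "s - 2"] by simp
  then show ?thesis unfolding leg_def nblocks_def using assms(2) by simp
qed

lemma leg_div: "j < s - 2 \<Longrightarrow> (leg b j - m - 1) div (s - 2) = b"
  unfolding leg_def by simp

lemma leg_cases:
  assumes "m < q" "q < nblocks"
  obtains b j where "b < m" "j < s - 2" "q = leg b j"
proof
  define b where "b = (q - m - 1) div (s - 2)"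
  define j where "j = (q - m - 1) mod (s - 2)"
  show "j < s - 2" unfolding j_def using s_ge_3 by simp
  show "q = leg b j"
    unfolding leg_def b_def j_def using assms(1) div_mult_mod_eq[of "q - m - 1" "s - 2"] by linarith
  have "q - m - 1 < m * (s - 2)" using assms unfolding nblocks_def by linarith
  then show "b < m" unfolding b_def using s_ge_3 by (simp add: div_less_iff_less_mult)
qed

lemma simple_hub_graph: "simple_graph hub_graph"
  unfolding simple_graph_def
proof (intro conjI ballI)
  show "finite (verts hub_graph)" using finite_V by simp
  fix e assume "e \<in> edges hub_graph"
  then consider x where "e = {x, Suc x}" "x \<in> V" "Suc x \<in> V"
    | b j where "e = {vx b k, vx (leg b j) 0}" "b < m" "j < s - 2"
    unfolding edges_hub_graph successor_edges_def leg_edges_def by blast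
  then show "\<exists>x y. x \<noteq> y \<and> x \<in> verts hub_graph \<and> y \<in> verts hub_graph \<and> e = {x, y}"
  proof cases
    case (1 x)
    then show ?thesis by (intro exI[of _ x] exI[of _ "Suc x"]) simp
  next
    case (2 b j)
    then have "vx b k \<in> V" "vx (leg b j) 0 \<in> V" "vx b k \<noteq> vx (leg b j) 0"
      using hub_in_V_iff vx_in_V leg_less_nblocks k_ge_2 by auto
    then show ?thesis using 2(1) by (intro exI[of _ "vx b k"] exI[of _ "vx (leg b j) 0"]) simp
  qed
qed

lemma leg_start_if_pred_notin_V:
  assumes "x \<in> V" "x \<noteq> 0" "x - 1 \<notin> V"
  obtains b j where "b < m" "j < s - 2" "x = vx (leg b j) 0"
proof -
  from assms(1) obtain q where q: "x = vx q 0" "m < q" "q < nblocks"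
  proof (cases rule: V_cases)
    case (1 q r)
    have "r = 0"
    proof (rule ccontr)
      assume "r \<noteq> 0"
      then have "x - 1 = vx q (r - 1)" using 1 by (simp add: vx_def)
      then show False using assms(3) 1 vx_in_V by simp
    qed
    moreover have "m < q"
    proof (rule ccontr)
      assume "\<not> m < q"
      moreover have "q \<noteq> 0" using assms(2) 1 \<open>r = 0\<close> by (auto simp: vx_def)
      ultimately have "x - 1 = vx (q - 1) k" "q - 1 < m"
        using 1 \<open>r = 0\<close> Suc_vx_hub[of "q - 1"] by simp_all
      then show False using assms(3) hub_in_V_iff by simp
    qed
    ultimately show ?thesis using that 1 by blast
  next
    case (2 b)
    then have "x - 1 = vx b (k - 1)" using k_ge_2 by (simp add: vx_def)
    then show ?thesis using assms(3) 2 vx_in_V m_less_nblocks k_ge_2 by simp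
  qed
  from q(2,3) obtain b j where "b < m" "j < s - 2" "q = leg b j" by (rule leg_cases)
  then show thesis using that q(1) by blast
qed

lemma hub_graph_smaller_neighbour:
  assumes "x \<in> V" "x \<noteq> 0"
  shows "\<exists>y\<in>V. y < x \<and> adj hub_graph y x"
proof (cases "x - 1 \<in> V")
  case True
  have "Suc (x - 1) = x" using assms(2) by simp
  then have "{x - 1, x} \<in> successor_edges"
    unfolding successor_edges_def using True assms(1) by (intro CollectI exI[of _ "x - 1"]) simp
  then show ?thesis using True assms(2) unfolding adj_def by (intro bexI[of _ "x - 1"]) auto
next
  case False
  then obtain b j where bj: "b < m" "j < s - 2" "x = vx (leg b j) 0"
    using assms leg_start_if_pred_notin_V by blast
  have "{vx b k, x} \<in> leg_edges" unfolding leg_edges_def using bj by blast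
  moreover have "vx b k < x" using bj by (simp add: vx_less_vx leg_def)
  moreover have "vx b k \<in> V" using bj(1) hub_in_V_iff by simp
  ultimately show ?thesis unfolding adj_def by auto
qed

lemma zero_in_V: "0 \<in> V" and one_in_V: "1 \<in> V"
  using vx_in_V[of 0 0] vx_in_V[of 0 1] k_ge_2 m_less_nblocks by (simp_all add: vx_def)

lemma connected_hub_graph: "connected_graph hub_graph"
  using zero_in_V hub_graph_smaller_neighbour
  by (intro connected_graph_if_smaller_neighbour[of 0]) auto

lemma successor_edge_neighbour: "{x, y} \<in> successor_edges \<Longrightarrow> y \<in> {x - 1, Suc x}"
  unfolding successor_edges_def by (auto simp: doubleton_eq_iff)

lemma leg_edge_neighbour_of_hub:
  assumes "{vx b k, y} \<in> leg_edges"
  shows "y \<in> (\<lambda>j. vx (leg b j) 0) ` {..<s - 2}"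
proof -
  obtain b' j where e: "{vx b k, y} = {vx b' k, vx (leg b' j) 0}" "j < s - 2"
    using assms unfolding leg_edges_def by blast
  have "vx b k \<noteq> vx (leg b' j) 0" using k_ge_2 by simp
  then have "b = b'" "y = vx (leg b' j) 0" using e(1) by (auto simp: doubleton_eq_iff)
  then show ?thesis using e(2) by simp
qed

lemma leg_edge_neighbour_of_non_hub:
  assumes "{x, y} \<in> leg_edges" "x \<notin> hubs"
  shows "y = vx ((x div Suc k - m - 1) div (s - 2)) k"
proof -
  obtain b j where e: "{x, y} = {vx b k, vx (leg b j) 0}" "b < m" "j < s - 2"
    using assms(1) unfolding leg_edges_def by blast
  have "x \<noteq> vx b k" using assms(2) e(2) unfolding hubs_def by blast
  then have "x = vx (leg b j) 0" "y = vx b k" using e(1) by (auto simp: doubleton_eq_iff)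
  then show ?thesis using leg_div[OF e(3)] by simp
qed

lemma degree_hub_graph_le: "degree hub_graph x \<le> s"
proof (cases "x \<in> hubs")
  case True
  then obtain b where x: "x = vx b k" unfolding hubs_def by blast
  let ?legs = "(\<lambda>j. vx (leg b j) 0) ` {..<s - 2}"
  have "degree hub_graph x \<le> card ({x - 1, Suc x} \<union> ?legs)"
    using successor_edge_neighbour leg_edge_neighbour_of_hub x
    by (intro degree_le_card simple_hub_graph) (auto simp: adj_def)
  also have "\<dots> \<le> card {x - 1, Suc x} + card ?legs" by (rule card_Un_le)
  also have "\<dots> \<le> 2 + (s - 2)"
    by (intro add_mono card_image_le[THEN order_trans]) (auto simp: card_insert_if)
  finally show ?thesis using s_ge_3 by simp
next
  case False
  let ?hub = "vx ((x div Suc k - m - 1) div (s - 2)) k"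
  have "degree hub_graph x \<le> card {x - 1, Suc x, ?hub}"
    using successor_edge_neighbour leg_edge_neighbour_of_non_hub False
    by (intro degree_le_card simple_hub_graph) (auto simp: adj_def)
  also have "\<dots> \<le> 3" by (simp add: card_insert_if)
  finally show ?thesis using s_ge_3 by simp
qed

lemma in_Gclass_hub_graph: "in_Gclass 1 s hub_graph"
  unfolding in_Gclass_def
proof (intro conjI ballI)
  fix x assume x: "x \<in> verts hub_graph"
  obtain y where "y \<in> V" "y \<noteq> x" using zero_in_V one_in_V by (cases "x = 0") auto
  then obtain z where "adj hub_graph x z"
    using connected_graph_ex_adj[OF connected_hub_graph] x by auto
  then show "1 \<le> degree hub_graph x"
    using degree_pos[OF simple_hub_graph] by (simp add: Suc_le_eq)
  show "degree hub_graph x \<le> s" by (rule degree_hub_graph_le)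
qed (rule simple_hub_graph)

lemma edge_avoiding_hubs:
  assumes "e \<in> edges hub_graph" "e \<inter> hubs = {}"
  obtains q r where "Suc r < k" "e = {vx q r, vx q (Suc r)}"
proof -
  have "e \<notin> leg_edges" using assms(2) unfolding leg_edges_def hubs_def by blast
  then obtain x where x: "e = {x, Suc x}" "x \<in> V" "Suc x \<in> V"
    using assms(1) unfolding edges_hub_graph successor_edges_def by blast
  have not_hub: "vx b k \<notin> e" if "b < m" for b
    using assms(2) that unfolding hubs_def by blast
  from x(2) obtain q r where qr: "x = vx q r" "r < k"
    by (cases rule: V_cases) (use not_hub x(1) in auto)
  have "Suc r \<noteq> k"
  proof
    assume "Suc r = k"
    then have "vx q k \<in> e" using qr x(1) Suc_vx[of q r] by simp
    moreover have "q < m" using \<open>Suc r = k\<close> qr x(3) Suc_vx[of q r] hub_in_V_iff by simp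
    ultimately show False using not_hub by blast
  qed
  with qr have "Suc r < k" by simp
  then show thesis using x(1) qr(1) Suc_vx[of q r] by (intro that[of r q]) simp_all
qed

lemma tree_meets_hubs:
  assumes sub: "subgraph T hub_graph" and tree: "is_tree T" and card_T: "card (edges T) = k"
  shows "verts T \<inter> hubs \<noteq> {}"
proof
  assume avoid: "verts T \<inter> hubs = {}"
  have conn: "connected_graph T" and simple: "simple_graph T"
    using tree unfolding is_tree_def by simp_all
  have e_verts: "e \<subseteq> verts T" if e: "e \<in> edges T" for e
  proof -
    obtain x y where "x \<in> verts T" "y \<in> verts T" "e = {x, y}"
      using simple e unfolding simple_graph_def by meson
    then show ?thesis by simp
  qed
  have block_edge: "\<exists>q r. Suc r < k \<and> e = {vx q r, vx q (Suc r)}" if "e \<in> edges T" for e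
  proof -
    have "e \<in> edges hub_graph" using sub that unfolding subgraph_def by blast
    moreover have "e \<inter> hubs = {}" using avoid e_verts[OF that] by blast
    ultimately show ?thesis by (rule edge_avoiding_hubs) blast
  qed
  have same_block: "u div Suc k = v div Suc k" if "adj T u v" for u v
    using block_edge[of "{u, v}"] that unfolding adj_def by (auto simp: doubleton_eq_iff)
  obtain u0 where u0: "u0 \<in> verts T" using conn unfolding connected_graph_def by blast
  let ?q = "u0 div Suc k"
  have "edges T \<subseteq> (\<lambda>r. {vx ?q r, vx ?q (Suc r)}) ` {..<k - 1}"
  proof
    fix e assume e: "e \<in> edges T"
    then obtain q r where qr: "Suc r < k" "e = {vx q r, vx q (Suc r)}" using block_edge by blast
    then have "vx q r \<in> verts T" using e_verts[OF e] by simp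
    then have "vx q r div Suc k = ?q"
      using connected_graph_const[of T "\<lambda>u. u div Suc k", OF conn same_block _ u0] by simp
    then show "e \<in> (\<lambda>r. {vx ?q r, vx ?q (Suc r)}) ` {..<k - 1}" using qr by simp
  qed
  then have "card (edges T) \<le> card ((\<lambda>r. {vx ?q r, vx ?q (Suc r)}) ` {..<k - 1})"
    by (intro card_mono) auto
  also have "\<dots> \<le> k - 1" using card_image_le[of "{..<k - 1}"] by simp
  finally show False using card_T k_ge_2 by simp
qed

lemma card_hubs: "card hubs = m"
proof -
  have "inj_on (\<lambda>b. vx b k) {..<m}" by (auto simp: inj_on_def)
  then show ?thesis unfolding hubs_def by (simp add: card_image)
qed

definition hub_path :: "nat \<Rightarrow> nat graph" where "hub_path b = path_graph (vx b 0) k"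

lemma verts_hub_path: "verts (hub_path b) = {vx b 0..vx b k}"
  unfolding hub_path_def by (simp add: vx_def)

lemma div_verts_hub_path: "x \<in> verts (hub_path b) \<Longrightarrow> x div Suc k = b"
  unfolding verts_hub_path vx_def by (intro div_nat_eqI) (auto simp: algebra_simps)

lemma verts_hub_path_subset:
  assumes "b < m"
  shows "verts (hub_path b) \<subseteq> V"
proof
  fix x assume x: "x \<in> verts (hub_path b)"
  define r where "r = x mod Suc k"
  have "x = vx b r"
    using div_verts_hub_path[OF x] div_mult_mod_eq[of x "Suc k"] unfolding vx_def r_def by simp
  moreover have "r < k \<or> r = k" using mod_less_divisor[of "Suc k" x] unfolding r_def by linarith
  moreover have "b < nblocks" using assms m_less_nblocks by simp
  ultimately show "x \<in> V" using assms vx_in_V hub_in_V_iff by auto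
qed

lemma subgraph_hub_path:
  assumes "b < m"
  shows "subgraph (hub_path b) hub_graph"
  unfolding subgraph_def
proof (intro conjI)
  show "verts (hub_path b) \<subseteq> verts hub_graph" using verts_hub_path_subset[OF assms] by simp
  show "simple_graph (hub_path b)" using is_tree_path_graph unfolding hub_path_def is_tree_def by blast
  show "edges (hub_path b) \<subseteq> edges hub_graph"
  proof
    fix e assume "e \<in> edges (hub_path b)"
    then obtain x where "e = {x, Suc x}" "x \<in> verts (hub_path b)" "Suc x \<in> verts (hub_path b)"
      unfolding hub_path_def by auto
    then show "e \<in> edges hub_graph"
      using verts_hub_path_subset[OF assms] by (auto simp: successor_edges_def)
  qed
qed

lemma tree_packing_hub_paths: "tree_packing k hub_graph (hub_path ` {..<m})"
  unfolding tree_packing_def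
proof (intro conjI ballI impI)
  fix T assume "T \<in> hub_path ` {..<m}"
  then obtain b where "b < m" "T = hub_path b" by blast
  then show "subgraph T hub_graph" "is_tree T" "card (edges T) = k"
    using subgraph_hub_path is_tree_path_graph card_edges_path_graph unfolding hub_path_def by simp_all
next
  fix T1 T2 assume "T1 \<in> hub_path ` {..<m}" "T2 \<in> hub_path ` {..<m}" "T1 \<noteq> T2"
  then obtain b1 b2 where "T1 = hub_path b1" "T2 = hub_path b2" "b1 \<noteq> b2" by blast
  then show "verts T1 \<inter> verts T2 = {}" using div_verts_hub_path by blast
qed

lemma card_hub_paths: "card (hub_path ` {..<m}) = m"
proof -
  have "inj_on hub_path {..<m}"
  proof (rule inj_onI)
    fix b b' assume "hub_path b = hub_path b'"
    moreover have "vx b 0 \<in> verts (hub_path b)" by (simp add: verts_hub_path vx_def)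
    ultimately have "vx b 0 \<in> verts (hub_path b')" by simp
    then show "b = b'" using div_verts_hub_path by force
  qed
  then show ?thesis by (simp add: card_image)
qed

lemma tau_hub_graph: "tau k hub_graph = m"
proof -
  have "card Ts \<le> card (hub_path ` {..<m})" if "tree_packing k hub_graph Ts" for Ts
  proof -
    have "finite hubs" unfolding hubs_def by simp
    with that have "card Ts \<le> card hubs"
      using tree_meets_hubs by (rule tree_packing_card_le_hitting_set)
    then show ?thesis using card_hubs card_hub_paths by simp
  qed
  then show ?thesis using tau_eqI[OF tree_packing_hub_paths] card_hub_paths by simp
qed

end

theorem theorem1p10:
  fixes s k :: nat
  assumes "s \<ge> 3" and "k \<ge> 2"
  shows "\<exists>\<G> :: nat graph set. infinite \<G> \<and>
    (\<forall>G\<in>\<G>. \<forall>H\<in>\<G>. G \<noteq> H \<longrightarrow> \<not> graph_iso G H) \<and>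
    (\<forall>G\<in>\<G>. connected_graph G \<and> in_Gclass 1 s G \<and> card (verts G) \<noteq> k \<and>
       real (tau k G) = (real (card (verts G)) - real k) / real (s * k - k + 1))"
proof -
  have hc: "hub_construction k s" using assms by unfold_locales
  define F where "F m = hub_construction.hub_graph k s (Suc m)" for m
  define d where "d = s * k - k + 1"
  have card_F: "card (verts (F m)) = k + Suc m * d" for m
    unfolding F_def d_def
    using hub_construction.verts_hub_graph[OF hc] hub_construction.card_V[OF hc] by simp
  have "d > 0" unfolding d_def by simp
  have card_F_inj: "m = m'" if "card (verts (F m)) = card (verts (F m'))" for m m'
    using that \<open>d > 0\<close> unfolding card_F by simp
  show ?thesis
  proof (intro exI[of _ "range F"] conjI ballI impI)
    have "inj F" using card_F_inj by (metis injI)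
    then show "infinite (range F)" by (metis finite_imageD infinite_UNIV_nat)
  next
    fix G H assume "G \<in> range F" "H \<in> range F" "G \<noteq> H"
    then show "\<not> graph_iso G H" using graph_iso_card_verts card_F_inj by blast
  next
    fix G assume "G \<in> range F"
    then obtain m where G: "G = F m" by blast
    show "connected_graph G"
      unfolding G F_def by (rule hub_construction.connected_hub_graph[OF hc])
    show "in_Gclass 1 s G"
      unfolding G F_def by (rule hub_construction.in_Gclass_hub_graph[OF hc])
    show "card (verts G) \<noteq> k" unfolding G card_F using \<open>d > 0\<close> by simp
    have "tau k G = Suc m" unfolding G F_def by (rule hub_construction.tau_hub_graph[OF hc])
    then show "real (tau k G) = (real (card (verts G)) - real k) / real (s * k - k + 1)"
      unfolding G card_F d_def[symmetric] using \<open>d > 0\<close> by (simp add: field_simps)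
  qed
qed

end
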